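(* Let $R$ be an associative ring with identity and involution $*$, and let $a\in R^{\#}\cap R^{\dagger}$. Then $a\in R^{SEP}$ if and only if $(aa^*a^{\dagger}a^{\dagger}a^2)^k\in PE(R)$ for both $k=2$ and $k=3$.
   Context: An involution on $R$ is a map $x\mapsto x^*$ with $(x^* )^*=x$, $(x+y)^*=x^*+y^*$, $(xy)^*=y^*x^*$. An element $a$ is Moore–Penrose invertible if there is $b$ with $aba=a$, $bab=b$, $(ab)^*=ab$, $(ba)^*=ba$; such $b$ is unique, denoted $a^{\dagger}$, and $R^{\dagger}$ is the set of such $a$. An element $a$ is group invertible if there is $b$ with $aba=a$, $bab=b$, $ab=ba$; such $b$ is unique, denoted $a^{\#}$, and $R^{\#}$ is the set of such $a$. $PE(R)=\{e\in R: e^2=e=e^*\}$ is the set of projections. For $a\in R^{\#}\cap R^{\dagger}$, $a$ is SEP if $a^*=a^{\dagger}=a^{\#}$; $R^{SEP}$ denotes the set of SEP elements. *)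

theory Defs
  imports Main
begin

definition involution :: "('a::ring_1 \<Rightarrow> 'a) \<Rightarrow> bool" where
  "involution st \<longleftrightarrow>
     (\<forall>x. st (st x) = x) \<and>
     (\<forall>x y. st (x + y) = st x + st y) \<and>
     (\<forall>x y. st (x * y) = st y * st x)"

definition is_mp_inverse :: "('a::ring_1 \<Rightarrow> 'a) \<Rightarrow> 'a \<Rightarrow> 'a \<Rightarrow> bool" where
  "is_mp_inverse st a b \<longleftrightarrow>
     a * b * a = a \<and> b * a * b = b \<and> st (a * b) = a * b \<and> st (b * a) = b * a"

definition mp_invertible :: "('a::ring_1 \<Rightarrow> 'a) \<Rightarrow> 'a \<Rightarrow> bool" where
  "mp_invertible st a \<longleftrightarrow> (\<exists>b. is_mp_inverse st a b)"

definition mp_inv :: "('a::ring_1 \<Rightarrow> 'a) \<Rightarrow> 'a \<Rightarrow> 'a" where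
  "mp_inv st a = (THE b. is_mp_inverse st a b)"

definition is_group_inverse :: "'a::ring_1 \<Rightarrow> 'a \<Rightarrow> bool" where
  "is_group_inverse a b \<longleftrightarrow> a * b * a = a \<and> b * a * b = b \<and> a * b = b * a"

definition group_invertible :: "'a::ring_1 \<Rightarrow> bool" where
  "group_invertible a \<longleftrightarrow> (\<exists>b. is_group_inverse a b)"

definition group_inv :: "'a::ring_1 \<Rightarrow> 'a" where
  "group_inv a = (THE b. is_group_inverse a b)"

definition projection :: "('a::ring_1 \<Rightarrow> 'a) \<Rightarrow> 'a \<Rightarrow> bool" where
  "projection st e \<longleftrightarrow> e * e = e \<and> e = st e"

definition SEP :: "('a::ring_1 \<Rightarrow> 'a) \<Rightarrow> 'a \<Rightarrow> bool" where
  "SEP st a \<longleftrightarrow> group_invertible a \<and> mp_invertible st a \<and>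
     st a = mp_inv st a \<and> mp_inv st a = group_inv a"

end

theory Submission
  imports Defs
begin

text \<open>Write \<open>b = a\<^sup>\<dagger>\<close>, \<open>g = a\<^sup>#\<close> and \<open>x = a a\<^sup>* b b a\<^sup>2\<close>
  (the test element).
  If \<open>x\<^sup>2\<close> and \<open>x\<^sup>3\<close> are idempotent then \<open>x\<^sup>3 = x\<^sup>2\<close>, and since \<open>x\<close> and the projection
  \<open>a b\<close> generate the same right ideal, this forces \<open>x\<close> to be idempotent; as \<open>x\<^sup>2\<close> is
  self-adjoint, \<open>x\<close> is then a projection with the same range as \<open>a b\<close>, so \<open>x = a b\<close>.
  From \<open>x = a b\<close> one reads off \<open>a b = g a\<close>, hence \<open>a b = b a\<close> and \<open>b = g\<close>; then
  \<open>x = a a\<^sup>*\<close>, so \<open>a\<^sup>* = b a a\<^sup>* = b a b = b\<close>.  Conversely, if \<open>a\<^sup>* = b = g\<close> then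
  \<open>x = a b\<close>, a projection.\<close>

lemma involution_mult: "involution st \<Longrightarrow> st (x * y) = st y * st x"
  by (simp add: involution_def)

lemma is_mp_inverse_unique:
  assumes st: "involution st" and "is_mp_inverse st a b" and "is_mp_inverse st a c"
  shows "b = c"
proof -
  have b: "a * b * a = a" "b * a * b = b" "st (a * b) = a * b" "st (b * a) = b * a"
    and c: "a * c * a = a" "c * a * c = c" "st (a * c) = a * c" "st (c * a) = c * a"
    using assms(2,3) by (auto simp: is_mp_inverse_def)
  note st_mult = involution_mult[OF st]
  have "b = b * st (a * b)"
    using b by (simp add: mult.assoc)
  also have "\<dots> = b * st (a * c * a * b)"
    using c by simp
  also have "\<dots> = b * (st (a * b) * st (a * c))"
    by (simp add: st_mult mult.assoc)
  also have "\<dots> = b * a * c"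
    using b c by (metis mult.assoc)
  finally have bac: "b = b * a * c" .
  have "c = st (c * a) * c"
    using c by simp
  also have "\<dots> = st (c * a * b * a) * c"
    using b by (simp add: mult.assoc)
  also have "\<dots> = st (b * a) * st (c * a) * c"
    by (simp add: st_mult mult.assoc)
  also have "\<dots> = b * a * c"
    using b c by (metis mult.assoc)
  finally show ?thesis
    using bac by simp
qed

lemma is_group_inverse_unique:
  assumes "is_group_inverse a b" and "is_group_inverse a c"
  shows "b = c"
proof -
  have b: "a * b * a = a" "b * a * b = b" "a * b = b * a"
    and c: "a * c * a = a" "c * a * c = c" "a * c = c * a"
    using assms by (auto simp: is_group_inverse_def)
  have "b = b * b * a"
    using b by (metis mult.assoc)
  also have "\<dots> = b * b * (a * c * a)"
    using c by simp
  also have "\<dots> = b * a * c"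
    using b c by (metis mult.assoc)
  also have "\<dots> = a * b * a * c * c"
    using b c by (metis mult.assoc)
  also have "\<dots> = c"
    using b c by simp
  finally show ?thesis .
qed

lemma mp_inv_eqI: "involution st \<Longrightarrow> is_mp_inverse st a b \<Longrightarrow> mp_inv st a = b"
  unfolding mp_inv_def by (rule the_equality) (auto intro: is_mp_inverse_unique)

lemma group_inv_eqI: "is_group_inverse a g \<Longrightarrow> group_inv a = g"
  unfolding group_inv_def by (rule the_equality) (auto intro: is_group_inverse_unique)

lemma projection_eqI:
  assumes st: "involution st" and "projection st p" "projection st q"
    and "p * q = q" "q * p = p"
  shows "p = q"
proof -
  have "st p = p" "st q = q"
    using assms(2,3) by (simp_all add: projection_def)
  then have "q = st (p * q)"
    using assms(4) by simp
  also have "\<dots> = p"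
    using \<open>st p = p\<close> \<open>st q = q\<close> assms(5) by (simp add: involution_mult[OF st])
  finally show ?thesis ..
qed

lemma power3_eq_power2_if_powers_idempotent:
  fixes x :: "'a::monoid_mult"
  assumes "x ^ 2 * x ^ 2 = x ^ 2" and "x ^ 3 * x ^ 3 = x ^ 3"
  shows "x ^ 3 = x ^ 2"
proof -
  have "x ^ 3 = x ^ 2 * x ^ 2 * x ^ 2"
    using assms(2) by (simp flip: power_add)
  with assms(1) show ?thesis
    by simp
qed

lemma idempotent_if_power3_eq_power2:
  fixes x e z :: "'a::monoid_mult"
  assumes cube: "x ^ 3 = x ^ 2" and "e * x = x" and "x * z = e" and "e * z = z"
  shows "x * e = e" and "x * x = x"
proof -
  have "x * x * e = x * e"
    using cube \<open>x * z = e\<close> by (metis mult.assoc power2_eq_square power3_eq_cube)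
  then show xe: "x * e = e"
    using assms(2-4) by (metis mult.assoc)
  show "x * x = x"
    using xe \<open>e * x = x\<close> by (metis mult.assoc)
qed

locale mp_and_group_inverse =
  fixes st :: "'a::ring_1 \<Rightarrow> 'a" and a b g :: 'a
  assumes involution: "involution st"
    and mp_inverse: "is_mp_inverse st a b"
    and group_inverse: "is_group_inverse a g"
begin

lemma st_mult: "st (x * y) = st y * st x"
  using involution by (rule involution_mult)

lemma mp_identities: "a * b * a = a" "b * a * b = b" "st (a * b) = a * b" "st (b * a) = b * a"
  using mp_inverse by (auto simp: is_mp_inverse_def)

lemma group_identities: "a * g * a = a" "g * a * g = g" "a * g = g * a"
  using group_inverse by (auto simp: is_group_inverse_def)

lemma projection_ab: "projection st (a * b)"
  using mp_identities by (simp add: projection_def mult.assoc)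

lemma ab_g: "a * b * g = g"
  using mp_identities group_identities by (metis mult.assoc)

lemma ba_st_a: "b * a * st a = st a"
proof -
  have "st a = st (a * (b * a))"
    using mp_identities by (simp add: mult.assoc)
  also have "\<dots> = b * a * st a"
    using mp_identities by (simp add: st_mult)
  finally show ?thesis ..
qed

lemma a_st_a_st_b: "a * st a * st b = a"
proof -
  have "a * st a * st b = a * st (b * a)"
    by (simp add: st_mult mult.assoc)
  also have "\<dots> = a"
    using mp_identities by (simp add: mult.assoc)
  finally show ?thesis .
qed

lemma b_st_ga: "b * st (g * a) = b"
proof -
  have "b * st (g * a) = b * st (a * b) * st (g * a)"
    using mp_identities by (metis mult.assoc)
  also have "\<dots> = b * st (g * a * a * b)"
    by (simp add: st_mult mult.assoc)
  also have "\<dots> = b"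
    using mp_identities group_identities by (metis mult.assoc)
  finally show ?thesis .
qed

lemma a_a_g: "a * a * g = a"
  using group_identities by (metis mult.assoc)

lemma test_element_generates_ab:
  "\<exists>z. a * b * z = z \<and> a * st a * b * b * a ^ 2 * z = a * b"
proof -
  define w where "w = g * g * a * st a * st g"
  define v where "v = a * st a * st g"
  define u where "u = st b * b"
  have "b * a ^ 2 * w = b * (a * a * g * g * a) * st a * st g"
    unfolding w_def by (simp add: power2_eq_square mult.assoc)
  also have "\<dots> = b * a * st a * st g"
    using a_a_g group_identities by (simp add: mult.assoc)
  also have "\<dots> = st (g * a)"
    by (simp add: ba_st_a st_mult)
  finally have "b * a ^ 2 * w = st (g * a)" .
  then have step_w: "a * st a * b * b * a ^ 2 * w = a * st a * b"
    using b_st_ga by (metis mult.assoc)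
  have "a * st a * b * v = a * st (g * a * a)"
    unfolding v_def using ba_st_a by (metis st_mult mult.assoc)
  then have step_v: "a * st a * b * v = a * st a"
    using a_a_g group_identities by metis
  have step_u: "a * st a * u = a * b"
    unfolding u_def using a_st_a_st_b by (metis mult.assoc)
  have "a * st a * b * b * a ^ 2 * (w * v * u) = a * st a * b * b * a ^ 2 * w * v * u"
    by (simp only: mult.assoc)
  also have "\<dots> = a * b"
    by (simp only: step_w step_v step_u)
  finally have "a * st a * b * b * a ^ 2 * (w * v * u) = a * b" .
  moreover have "a * b * (w * v * u) = w * v * u"
    unfolding w_def by (simp add: ab_g flip: mult.assoc)
  ultimately show ?thesis
    by blast
qed

lemma test_element_eq_ab:
  assumes "(a * st a * b * b * a ^ 2) ^ 3 = (a * st a * b * b * a ^ 2) ^ 2"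
    and "st ((a * st a * b * b * a ^ 2) ^ 2) = (a * st a * b * b * a ^ 2) ^ 2"
  shows "a * st a * b * b * a ^ 2 = a * b"
proof -
  define x where "x = a * st a * b * b * a ^ 2"
  obtain z where "a * b * z = z" "x * z = a * b"
    using test_element_generates_ab unfolding x_def by blast
  moreover have abx: "a * b * x = x"
    unfolding x_def by (simp add: mp_identities flip: mult.assoc)
  ultimately have "x * (a * b) = a * b" "x * x = x"
    using idempotent_if_power3_eq_power2 assms(1)[folded x_def] by blast+
  moreover from \<open>x * x = x\<close> have "projection st x"
    using assms(2)[folded x_def] by (simp add: projection_def power2_eq_square)
  ultimately have "a * b = x"
    using projection_eqI[OF involution projection_ab] abx by blast
  then show ?thesis
    unfolding x_def by simp
qed

lemma SEP_conditions_if_test_element_eq_ab: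
  assumes x: "a * st a * b * b * a ^ 2 = a * b"
  shows "b = g" and "st a = b"
proof -
  have "a ^ 2 * (g * a) = a ^ 2"
    using a_a_g by (simp add: power2_eq_square flip: mult.assoc)
  have "g * a = a * b * (g * a)"
    using ab_g by (simp flip: mult.assoc)
  also have "\<dots> = a * st a * b * b * (a ^ 2 * (g * a))"
    by (simp only: x flip: mult.assoc)
  also have "\<dots> = a * b"
    using \<open>a ^ 2 * (g * a) = a ^ 2\<close> x by simp
  finally have ga: "g * a = a * b" .
  have aab: "a * (a * b) = a"
    using ga group_identities by (metis mult.assoc)
  have "b * a = st (b * a * (a * b))"
    using aab mp_identities by (simp add: mult.assoc)
  also have "\<dots> = a * b * (b * a)"
    by (simp only: st_mult[of "b * a"] mp_identities)
  also have "\<dots> = g * (a * b * a)"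
    using ga by (metis mult.assoc)
  also have "\<dots> = a * b"
    using ga mp_identities by simp
  finally have "is_group_inverse a b"
    using mp_identities unfolding is_group_inverse_def by simp
  then show bg: "b = g"
    using group_inverse by (rule is_group_inverse_unique)
  have "b * a * a = a"
    using a_a_g bg group_identities by metis
  have "st a * (b * a) = st (b * a * a)"
    by (simp only: st_mult[of "b * a"] mp_identities)
  also have "\<dots> = st a"
    using \<open>b * a * a = a\<close> by simp
  finally have "a * st a * b * b * a ^ 2 = a * st a"
    using \<open>b * a * a = a\<close> by (simp add: power2_eq_square mult.assoc)
  then have "a * st a = a * b"
    using x by simp
  then show "st a = b"
    using ba_st_a mp_identities by (metis mult.assoc)
qed

lemma test_element_eq_ab_if_SEP_conditions:
  assumes "st a = b" and "b = g"
  shows "a * st a * b * b * a ^ 2 = a * b"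
proof -
  have gga: "g * g * a = g"
    using group_identities by (metis mult.assoc)
  have "a * st a * b * b * a ^ 2 = a * (g * (g * g * a) * a)"
    using assms by (simp add: power2_eq_square mult.assoc)
  also have "\<dots> = a * b"
    using gga assms by simp
  finally show ?thesis .
qed

lemma SEP_conditions_iff_test_element_powers:
  "(st a = b \<and> b = g) \<longleftrightarrow>
    projection st ((a * st a * b * b * a ^ 2) ^ 2) \<and>
    projection st ((a * st a * b * b * a ^ 2) ^ 3)"
proof
  assume "st a = b \<and> b = g"
  then have "a * st a * b * b * a ^ 2 = a * b"
    using test_element_eq_ab_if_SEP_conditions by blast
  moreover have "(a * b) ^ 2 = a * b" "(a * b) ^ 3 = a * b"
    using projection_ab by (simp_all add: projection_def power2_eq_square power3_eq_cube)
  ultimately show "projection st ((a * st a * b * b * a ^ 2) ^ 2) \<and>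
      projection st ((a * st a * b * b * a ^ 2) ^ 3)"
    using projection_ab by simp
next
  assume "projection st ((a * st a * b * b * a ^ 2) ^ 2) \<and>
      projection st ((a * st a * b * b * a ^ 2) ^ 3)"
  then have "a * st a * b * b * a ^ 2 = a * b"
    by (intro test_element_eq_ab power3_eq_power2_if_powers_idempotent)
      (auto simp: projection_def)
  then show "st a = b \<and> b = g"
    using SEP_conditions_if_test_element_eq_ab by blast
qed
end

theorem theorem4p2:
  fixes st :: "'a::ring_1 \<Rightarrow> 'a" and a :: 'a
  assumes "involution st"
    and "group_invertible a"
    and "mp_invertible st a"
  shows "SEP st a \<longleftrightarrow>
    (projection st ((a * st a * mp_inv st a * mp_inv st a * a ^ 2) ^ 2) \<and>
     projection st ((a * st a * mp_inv st a * mp_inv st a * a ^ 2) ^ 3))"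
proof -
  obtain b where b: "is_mp_inverse st a b"
    using assms(3) by (auto simp: mp_invertible_def)
  obtain g where g: "is_group_inverse a g"
    using assms(2) by (auto simp: group_invertible_def)
  interpret mp_and_group_inverse st a b g
    using assms(1) b g by unfold_locales
  have "SEP st a \<longleftrightarrow> st a = b \<and> b = g"
    using assms b g by (simp add: SEP_def mp_inv_eqI group_inv_eqI)
  then show ?thesis
    using SEP_conditions_iff_test_element_powers mp_inv_eqI[OF assms(1) b] by simp
qed

end
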